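(* Let $\langle E,\rightarrow\rangle$ be a computation and $b$ a regular predicate. For events $e,f$, $J_b(e)\subseteq J_b(f)$ if and only if there is a directed path from $e$ to $f$ in the graph $S_b(E)$.
   Context: A computation is a directed graph $\langle E, \rightarrow\rangle$ whose vertices (events) are partitioned among processes $p_1,\dots,p_n$; events on each process are totally ordered, each process $p_i$ has an initial event $\bot_i$ (first) and final event $\top_i$ (last), the path relation contains Lamport's happened-before relation (in particular there is a path from each event to its successor on the same process), all initial events lie in one strongly connected component and all final events in one strongly connected component. $\top$ is the set of final events and $\mathrm{succ}(e)$ the successor of $e$ on its process. A subset $C\subseteq E$ is a consistent cut if for every edge $(u,v)$, $v\in C$ implies $u\in C$. A predicate is regular if whenever consistent cuts $C_1,C_2$ satisfy it, so do $C_1\cap C_2$ and $C_1\cup C_2$ (trivial cuts $\emptyset,E$ treated as satisfying $b$). $J_b(e)$ is the least consistent cut of $\langle E,\rightarrow\rangle$ that satisfies $b$ and contains $e$, or $E$ if none exists or $e\in\top$. $F_b(e)$ is the vector whose $i$-th entry is the earliest event $g$ on $p_i$ with $J_b(e)\subseteq J_b(g)$. The graph $S_b(E)$ has vertex set $E$ and edges: from each $e\notin\top$ to $\mathrm{succ}(e)$, and from each event $e$ to $F_b(e)[i]$ for each process $p_i$. Each vertex has a (trivial) path to itself. *)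

theory Defs
  imports Main
begin

text \<open>A computation: a finite nonempty set P of processes; process i has events
  ev i 0, ..., ev i (len i - 1) in process order (ev i 0 is the initial event,
  ev i (len i - 1) the final event). R is the edge relation of the graph.\<close>

definition events :: "'p set \<Rightarrow> ('p \<Rightarrow> nat) \<Rightarrow> ('p \<Rightarrow> nat \<Rightarrow> 'e) \<Rightarrow> 'e set" where
  "events P len ev = {ev i k | i k. i \<in> P \<and> k < len i}"

definition finals :: "'p set \<Rightarrow> ('p \<Rightarrow> nat) \<Rightarrow> ('p \<Rightarrow> nat \<Rightarrow> 'e) \<Rightarrow> 'e set" where
  "finals P len ev = {ev i (len i - 1) | i. i \<in> P}"

definition succ_ev :: "'p set \<Rightarrow> ('p \<Rightarrow> nat) \<Rightarrow> ('p \<Rightarrow> nat \<Rightarrow> 'e) \<Rightarrow> 'e \<Rightarrow> 'e" where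
  "succ_ev P len ev e =
     (THE s. \<exists>i\<in>P. \<exists>k. Suc k < len i \<and> e = ev i k \<and> s = ev i (Suc k))"

definition computation ::
  "'p set \<Rightarrow> ('p \<Rightarrow> nat) \<Rightarrow> ('p \<Rightarrow> nat \<Rightarrow> 'e) \<Rightarrow> ('e \<times> 'e) set \<Rightarrow> bool" where
  "computation P len ev R \<longleftrightarrow>
     finite P \<and> P \<noteq> {} \<and>
     (\<forall>i\<in>P. 1 \<le> len i) \<and>
     (\<forall>i\<in>P. \<forall>j\<in>P. \<forall>k l. k < len i \<longrightarrow> l < len j \<longrightarrow> ev i k = ev j l \<longrightarrow> i = j \<and> k = l) \<and>
     R \<subseteq> events P len ev \<times> events P len ev \<and>
     (\<forall>i\<in>P. \<forall>k. Suc k < len i \<longrightarrow> (ev i k, ev i (Suc k)) \<in> R\<^sup>+) \<and>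
     (\<forall>i\<in>P. \<forall>j\<in>P. (ev i 0, ev j 0) \<in> R\<^sup>*) \<and>
     (\<forall>i\<in>P. \<forall>j\<in>P. (ev i (len i - 1), ev j (len j - 1)) \<in> R\<^sup>*)"

definition consistent_cut :: "'e set \<Rightarrow> ('e \<times> 'e) set \<Rightarrow> 'e set \<Rightarrow> bool" where
  "consistent_cut E R C \<longleftrightarrow> C \<subseteq> E \<and> (\<forall>(u, v) \<in> R. v \<in> C \<longrightarrow> u \<in> C)"

text \<open>Satisfaction of b, with the trivial cuts treated as satisfying b.\<close>
definition sat :: "'e set \<Rightarrow> ('e set \<Rightarrow> bool) \<Rightarrow> 'e set \<Rightarrow> bool" where
  "sat E b C \<longleftrightarrow> C = {} \<or> C = E \<or> b C"

definition regular :: "'e set \<Rightarrow> ('e \<times> 'e) set \<Rightarrow> ('e set \<Rightarrow> bool) \<Rightarrow> bool" where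
  "regular E R b \<longleftrightarrow>
     (\<forall>C1 C2. consistent_cut E R C1 \<and> consistent_cut E R C2 \<and> sat E b C1 \<and> sat E b C2
        \<longrightarrow> sat E b (C1 \<inter> C2) \<and> sat E b (C1 \<union> C2))"

definition least_cut :: "'e set \<Rightarrow> ('e \<times> 'e) set \<Rightarrow> ('e set \<Rightarrow> bool) \<Rightarrow> 'e \<Rightarrow> 'e set \<Rightarrow> bool" where
  "least_cut E R b e C \<longleftrightarrow>
     consistent_cut E R C \<and> sat E b C \<and> e \<in> C \<and>
     (\<forall>C'. consistent_cut E R C' \<and> sat E b C' \<and> e \<in> C' \<longrightarrow> C \<subseteq> C')"

definition Jb :: "'p set \<Rightarrow> ('p \<Rightarrow> nat) \<Rightarrow> ('p \<Rightarrow> nat \<Rightarrow> 'e) \<Rightarrow> ('e \<times> 'e) set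
                    \<Rightarrow> ('e set \<Rightarrow> bool) \<Rightarrow> 'e \<Rightarrow> 'e set" where
  "Jb P len ev R b e =
     (let E = events P len ev in
      if e \<in> finals P len ev \<or> \<not> (\<exists>C. least_cut E R b e C) then E
      else (THE C. least_cut E R b e C))"

definition Fb :: "'p set \<Rightarrow> ('p \<Rightarrow> nat) \<Rightarrow> ('p \<Rightarrow> nat \<Rightarrow> 'e) \<Rightarrow> ('e \<times> 'e) set
                    \<Rightarrow> ('e set \<Rightarrow> bool) \<Rightarrow> 'e \<Rightarrow> 'p \<Rightarrow> 'e" where
  "Fb P len ev R b e i =
     ev i (LEAST k. k < len i \<and> Jb P len ev R b e \<subseteq> Jb P len ev R b (ev i k))"

definition Sb :: "'p set \<Rightarrow> ('p \<Rightarrow> nat) \<Rightarrow> ('p \<Rightarrow> nat \<Rightarrow> 'e) \<Rightarrow> ('e \<times> 'e) set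
                    \<Rightarrow> ('e set \<Rightarrow> bool) \<Rightarrow> ('e \<times> 'e) set" where
  "Sb P len ev R b =
     {(e, succ_ev P len ev e) | e. e \<in> events P len ev \<and> e \<notin> finals P len ev}
     \<union> {(e, Fb P len ev R b e i) | e i. e \<in> events P len ev \<and> i \<in> P}"

end

theory Submission
  imports Defs
begin

text \<open>J_b is monotone along every edge of S_b. For an F_b edge this is the definition of F_b;
  for a successor edge, the path from e to succ(e) in the computation forces e into every
  consistent cut containing succ(e), in particular into J_b(succ(e)). Conversely, if
  J_b(e) \<subseteq> J_b(f) and f lies on p_i, then F_b(e)[i] is at or before f on p_i, so the edge from e
  to F_b(e)[i] followed by successor edges reaches f. Regularity is used only to make J_b(e) a
  least cut: the b-satisfying consistent cuts containing e form a finite family closed under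
  intersection.\<close>

lemma finite_events:
  assumes "finite P" shows "finite (events P len ev)"
proof -
  have "finite (\<Union>i\<in>P. ev i ` {..<len i})" using assms by auto
  moreover have "events P len ev \<subseteq> (\<Union>i\<in>P. ev i ` {..<len i})"
    unfolding events_def by auto
  ultimately show ?thesis by (rule finite_subset[rotated])
qed

lemma consistent_cut_trancl:
  assumes "consistent_cut E R C" "(u, v) \<in> R\<^sup>+" "v \<in> C"
  shows "u \<in> C"
  using assms(2,3)
  by (induction rule: converse_trancl_induct) (use assms(1) in \<open>auto simp: consistent_cut_def\<close>)

lemma least_cut_unique: "least_cut E R b e C \<Longrightarrow> least_cut E R b e C' \<Longrightarrow> C = C'"
  unfolding least_cut_def by blast

lemma least_cut_exists:
  assumes fin: "finite E" and R: "R \<subseteq> E \<times> E" and reg: "regular E R b" and e: "e \<in> E"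
  shows "\<exists>C. least_cut E R b e C"
proof -
  let ?F = "\<lambda>C. consistent_cut E R C \<and> sat E b C \<and> e \<in> C"
  have "?F E" using e R unfolding consistent_cut_def sat_def by auto
  then obtain C where C: "?F C" and min_card: "\<And>C'. ?F C' \<Longrightarrow> card C \<le> card C'"
    using ex_has_least_nat[of ?F E card] by blast
  have "C \<subseteq> C'" if C': "?F C'" for C'
  proof -
    have "?F (C \<inter> C')"
      using reg C C' unfolding regular_def consistent_cut_def by blast
    then have "card C \<le> card (C \<inter> C')" by (rule min_card)
    moreover have "finite C" using C fin unfolding consistent_cut_def by (blast intro: finite_subset)
    ultimately have "C \<inter> C' = C" by (metis card_seteq inf_le1 finite_subset)
    then show ?thesis by blast
  qed
  with C show ?thesis unfolding least_cut_def by blast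
qed

lemma least_cut_The:
  "\<exists>C. least_cut E R b e C \<Longrightarrow> least_cut E R b e (THE C. least_cut E R b e C)"
  by (metis least_cut_unique theI)

lemma Jb_final: "x \<in> finals P len ev \<Longrightarrow> Jb P len ev R b x = events P len ev"
  unfolding Jb_def Let_def by simp

lemma Jb_subset_events: "Jb P len ev R b x \<subseteq> events P len ev"
proof -
  have "(THE C. least_cut (events P len ev) R b x C) \<subseteq> events P len ev"
    if "\<exists>C. least_cut (events P len ev) R b x C"
    using least_cut_The[OF that] unfolding least_cut_def consistent_cut_def by blast
  then show ?thesis unfolding Jb_def Let_def by simp
qed

context
  fixes P :: "'p set" and len :: "'p \<Rightarrow> nat" and ev :: "'p \<Rightarrow> nat \<Rightarrow> 'e" and R :: "('e \<times> 'e) set"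
  assumes comp: "computation P len ev R"
begin

lemma ev_in_events: "i \<in> P \<Longrightarrow> k < len i \<Longrightarrow> ev i k \<in> events P len ev"
  unfolding events_def by blast

lemma ev_inj:
  "i \<in> P \<Longrightarrow> j \<in> P \<Longrightarrow> k < len i \<Longrightarrow> l < len j \<Longrightarrow> ev i k = ev j l \<Longrightarrow> i = j \<and> k = l"
  using comp unfolding computation_def by blast

lemma last_in_finals: "i \<in> P \<Longrightarrow> ev i (len i - 1) \<in> finals P len ev"
  unfolding finals_def by blast

lemma len_pos: "i \<in> P \<Longrightarrow> 0 < len i"
  using comp unfolding computation_def by fastforce

lemma ev_notin_finals:
  assumes i: "i \<in> P" and k: "Suc k < len i"
  shows "ev i k \<notin> finals P len ev"
proof
  assume "ev i k \<in> finals P len ev"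
  then obtain j where "j \<in> P" "ev i k = ev j (len j - 1)" unfolding finals_def by blast
  with ev_inj[OF i, of j k "len j - 1"] len_pos k show False by auto
qed

lemma succ_ev_eq:
  assumes i: "i \<in> P" and k: "Suc k < len i"
  shows "succ_ev P len ev (ev i k) = ev i (Suc k)"
  unfolding succ_ev_def
proof (rule the_equality)
  fix s assume "\<exists>j\<in>P. \<exists>l. Suc l < len j \<and> ev i k = ev j l \<and> s = ev j (Suc l)"
  then obtain j l where "j \<in> P" "Suc l < len j" "ev i k = ev j l" "s = ev j (Suc l)" by blast
  with ev_inj[OF i, of j k l] k show "s = ev i (Suc k)" by auto
qed (use i k in blast)

lemma Sb_succ_edge:
  assumes i: "i \<in> P" and k: "Suc k < len i"
  shows "(ev i k, ev i (Suc k)) \<in> Sb P len ev R b"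
proof -
  have "(ev i k, succ_ev P len ev (ev i k)) \<in> Sb P len ev R b"
    using ev_in_events[OF i] ev_notin_finals[OF i k] k unfolding Sb_def by auto
  then show ?thesis using succ_ev_eq[OF i k] by simp
qed

lemma Sb_rtrancl_process_order:
  assumes i: "i \<in> P" and "m \<le> k" and "k < len i"
  shows "(ev i m, ev i k) \<in> (Sb P len ev R b)\<^sup>*"
  using assms(2,3)
proof (induction k rule: dec_induct)
  case (step k)
  then show ?case using Sb_succ_edge[OF i, of k] by (simp add: rtrancl_into_rtrancl)
qed simp

lemma Fb_least:
  assumes i: "i \<in> P"
  obtains m where "Fb P len ev R b e i = ev i m"
    and "Jb P len ev R b e \<subseteq> Jb P len ev R b (ev i m)"
    and "\<And>k. k < len i \<Longrightarrow> Jb P len ev R b e \<subseteq> Jb P len ev R b (ev i k) \<Longrightarrow> m \<le> k"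
proof -
  let ?Q = "\<lambda>k. k < len i \<and> Jb P len ev R b e \<subseteq> Jb P len ev R b (ev i k)"
  have "?Q (len i - 1)"
    using len_pos[OF i] Jb_final[OF last_in_finals[OF i]] Jb_subset_events[of P len ev R b e]
    by auto
  then have "?Q (LEAST k. ?Q k)" by (rule LeastI)
  with that show ?thesis unfolding Fb_def by (blast intro: Least_le)
qed

context
  fixes b :: "'e set \<Rightarrow> bool"
  assumes reg: "regular (events P len ev) R b"
begin

lemma Jb_least_cut:
  assumes e: "e \<in> events P len ev" and nf: "e \<notin> finals P len ev"
  shows "least_cut (events P len ev) R b e (Jb P len ev R b e)"
proof -
  have "finite P" and R: "R \<subseteq> events P len ev \<times> events P len ev"
    using comp unfolding computation_def by blast+
  then have "\<exists>C. least_cut (events P len ev) R b e C"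
    using least_cut_exists[OF finite_events R reg e] by blast
  with nf show ?thesis unfolding Jb_def Let_def by (simp add: least_cut_The)
qed

lemma Jb_mono_Suc:
  assumes i: "i \<in> P" and k: "Suc k < len i"
  shows "Jb P len ev R b (ev i k) \<subseteq> Jb P len ev R b (ev i (Suc k))"
proof (cases "ev i (Suc k) \<in> finals P len ev")
  case True
  then show ?thesis by (simp add: Jb_final Jb_subset_events)
next
  case False
  have least_k: "least_cut (events P len ev) R b (ev i k) (Jb P len ev R b (ev i k))"
    using Jb_least_cut ev_in_events[OF i] ev_notin_finals[OF i k] k by simp
  have least_Suc:
    "least_cut (events P len ev) R b (ev i (Suc k)) (Jb P len ev R b (ev i (Suc k)))"
    using Jb_least_cut ev_in_events[OF i k] False by simp
  have "(ev i k, ev i (Suc k)) \<in> R\<^sup>+"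
    using comp i k unfolding computation_def by blast
  moreover have "consistent_cut (events P len ev) R (Jb P len ev R b (ev i (Suc k)))"
    and "ev i (Suc k) \<in> Jb P len ev R b (ev i (Suc k))"
    using least_Suc unfolding least_cut_def by blast+
  ultimately have "ev i k \<in> Jb P len ev R b (ev i (Suc k))"
    by (blast intro: consistent_cut_trancl)
  with least_k least_Suc show ?thesis unfolding least_cut_def by blast
qed

lemma Jb_mono_Sb:
  assumes "(x, y) \<in> Sb P len ev R b"
  shows "Jb P len ev R b x \<subseteq> Jb P len ev R b y"
  using assms unfolding Sb_def
proof (elim UnE CollectE exE conjE)
  fix e assume edge: "(x, y) = (e, succ_ev P len ev e)"
    and e: "e \<in> events P len ev" and nf: "e \<notin> finals P len ev"
  then obtain i k where i: "i \<in> P" and "k < len i" and ik: "e = ev i k"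
    unfolding events_def by blast
  moreover have "k \<noteq> len i - 1" using nf i ik last_in_finals by auto
  ultimately have k: "Suc k < len i" by simp
  show ?thesis using edge ik succ_ev_eq[OF i k] Jb_mono_Suc[OF i k] by simp
next
  fix e i assume edge: "(x, y) = (e, Fb P len ev R b e i)" and i: "i \<in> P"
  obtain m where "Fb P len ev R b e i = ev i m"
    and "Jb P len ev R b e \<subseteq> Jb P len ev R b (ev i m)"
    using Fb_least[OF i] by blast
  with edge show ?thesis by simp
qed

end

end

theorem lemma7:
  fixes P :: "'p set" and len :: "'p \<Rightarrow> nat" and ev :: "'p \<Rightarrow> nat \<Rightarrow> 'e"
    and R :: "('e \<times> 'e) set" and b :: "'e set \<Rightarrow> bool" and e f :: 'e
  assumes "computation P len ev R"
    and "regular (events P len ev) R b"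
    and "e \<in> events P len ev" and "f \<in> events P len ev"
  shows "Jb P len ev R b e \<subseteq> Jb P len ev R b f \<longleftrightarrow> (e, f) \<in> (Sb P len ev R b)\<^sup>*"
proof
  assume sub: "Jb P len ev R b e \<subseteq> Jb P len ev R b f"
  obtain i k where i: "i \<in> P" and k: "k < len i" and f: "f = ev i k"
    using assms(4) unfolding events_def by blast
  obtain m where Fb: "Fb P len ev R b e i = ev i m"
    and least: "\<And>k. k < len i \<Longrightarrow> Jb P len ev R b e \<subseteq> Jb P len ev R b (ev i k) \<Longrightarrow> m \<le> k"
    using Fb_least[OF assms(1) i] by blast
  have "(e, Fb P len ev R b e i) \<in> Sb P len ev R b"
    using assms(3) i unfolding Sb_def by blast
  then have "(e, ev i m) \<in> Sb P len ev R b" by (simp only: Fb)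
  moreover have "(ev i m, f) \<in> (Sb P len ev R b)\<^sup>*"
    using Sb_rtrancl_process_order[OF assms(1) i least[OF k sub[unfolded f]] k] f by simp
  ultimately show "(e, f) \<in> (Sb P len ev R b)\<^sup>*" by simp
next
  assume "(e, f) \<in> (Sb P len ev R b)\<^sup>*"
  then show "Jb P len ev R b e \<subseteq> Jb P len ev R b f"
    by (induction rule: rtrancl_induct) (use Jb_mono_Sb[OF assms(1,2)] in blast)+
qed

end
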